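(* Let $n \ge 1$ and let $T_n$ be the $n\times n$ matrix with entries $t_{ij} = |i-j|$ for $i,j = 1,\ldots,n$. Then $T_n$ is solvable if and only if $n \equiv 0$ or $1 \pmod 4$. Equivalently: there exists a permutation $f:\{1,\ldots,n\}\to\{1,\ldots,n\}$ such that $|f(i)-i|$ takes each of the values $0,1,\ldots,n-1$ exactly once (as $i$ ranges over $\{1,\ldots,n\}$) if and only if $n \equiv 0$ or $1 \pmod 4$.
   Context: $T_n$ is called solvable if one can select $n$ entries of $T_n$, no two in the same row or the same column, whose values are exactly $0,1,\ldots,n-1$ (each value once). *)

theory Defs
  imports Main
begin

definition T :: "nat \<Rightarrow> nat \<Rightarrow> nat \<Rightarrow> int" where
  "T n i j = \<bar>int i - int j\<bar>"

text \<open>A selection of n entries of an n x n matrix M (indices 1..n), no two in the same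
  row or column, is given by a permutation f of {1..n} (entry (i, f i) selected in row i).\<close>
definition solvable :: "nat \<Rightarrow> (nat \<Rightarrow> nat \<Rightarrow> int) \<Rightarrow> bool" where
  "solvable n M \<longleftrightarrow> (\<exists>f. bij_betw f {1..n} {1..n} \<and>
      bij_betw (\<lambda>i. M i (f i)) {1..n} (int ` {0..<n}))"

end

theory Submission
  imports Defs
begin

text \<open>Necessity is a parity argument: \<open>|f i - i| \<equiv> f i - i (mod 2)\<close> and \<open>\<Sum>i (f i - i) = 0\<close> for a
  permutation \<open>f\<close>, so the sum \<open>0 + 1 + \<dots> + (n - 1) = n (n - 1) / 2\<close> of the selected entries
  must be even, which happens exactly when \<open>n \<equiv> 0, 1 (mod 4)\<close>.
  Sufficiency is an explicit permutation \<open>\<sigma>\<close> for \<open>n = 4m\<close> or \<open>n = 4m + 1\<close>, defined piecewise on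
  eight blocks of \<open>{1..n}\<close>; on each block the displacement \<open>|x - \<sigma> x|\<close> is an affine function of
  \<open>x\<close>, and blocks whose displacements have the same parity have disjoint ranges of
  displacements. Hence both \<open>\<sigma>\<close> and its displacement are injective, and a counting argument
  finishes the proof.\<close>

lemma inj_on_card_eq_imp_bij_betw:
  assumes "inj_on f A" "f ` A \<subseteq> B" "finite B" "card A = card B"
  shows "bij_betw f A B"
proof -
  have "card (f ` A) = card B"
    using assms(1,4) by (simp add: card_image)
  then have "f ` A = B"
    by (rule card_subset_eq[OF assms(3,2)])
  then show ?thesis
    using assms(1) by (rule bij_betw_imageI[rotated])
qed

lemma even_sum_abs_diff_bij_betw:
  fixes g :: "'a \<Rightarrow> int"
  assumes "finite A" "bij_betw \<pi> A A"
  shows "even (\<Sum>x\<in>A. \<bar>g x - g (\<pi> x)\<bar>)"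
proof -
  have "(\<Sum>x\<in>A. g (\<pi> x)) = (\<Sum>x\<in>A. g x)"
    using assms(2) by (rule sum.reindex_bij_betw)
  then have "(\<Sum>x\<in>A. \<bar>g x - g (\<pi> x)\<bar>) = (\<Sum>x\<in>A. \<bar>g x - g (\<pi> x)\<bar> - (g x - g (\<pi> x)))"
    by (simp add: sum_subtractf)
  also have "even \<dots>"
    by (rule dvd_sum) (auto simp: abs_if)
  finally show ?thesis .
qed

lemma even_sum_lessThan_iff: "even (\<Sum>{..<n::nat}) \<longleftrightarrow> n mod 4 = 0 \<or> n mod 4 = 1"
proof (induction n rule: less_induct)
  case (less n)
  show ?case
  proof (cases "n < 4")
    case True
    then consider "n = 0" | "n = 1" | "n = 2" | "n = 3" by linarith
    then show ?thesis by cases (simp_all add: lessThan_atLeast0 Sum_Ico_nat)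
  next
    case False
    define k where "k = n - 4"
    have k: "n = Suc (Suc (Suc (Suc k)))" using False unfolding k_def by linarith
    have "\<Sum>{..<n} = \<Sum>{..<k} + 2 * (2 * k + 3)"
      unfolding k by simp
    then have "even (\<Sum>{..<n}) \<longleftrightarrow> even (\<Sum>{..<k})" by simp
    moreover have "n mod 4 = k mod 4" using k by presburger
    ultimately show ?thesis using less.IH[of k] k by simp
  qed
qed

lemma sum_image_int_atLeast0LessThan: "(\<Sum>k\<in>int ` {0..<n}. k) = int (\<Sum>{..<n})"
  by (simp add: sum.reindex atLeast0LessThan)

lemma solvable_T_imp_mod_4:
  assumes "solvable n (T n)"
  shows "n mod 4 = 0 \<or> n mod 4 = 1"
proof -
  obtain f where f: "bij_betw f {1..n} {1..n}"
    and entries: "bij_betw (\<lambda>i. T n i (f i)) {1..n} (int ` {0..<n})"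
    using assms unfolding solvable_def by blast
  have "int (\<Sum>{..<n}) = (\<Sum>i\<in>{1..n}. T n i (f i))"
    using sum.reindex_bij_betw[OF entries, of id] by (simp add: sum_image_int_atLeast0LessThan)
  also have "even \<dots>"
    unfolding T_def using even_sum_abs_diff_bij_betw[OF _ f] by simp
  finally show ?thesis by (simp only: even_of_nat even_sum_lessThan_iff)
qed

locale residue_0_or_1_mod_4 =
  fixes n m :: nat
  assumes n_cases: "n = 4*m \<or> n = 4*m + 1"
begin

definition \<sigma> :: "nat \<Rightarrow> nat" where
  "\<sigma> x = (if x = 1 then n else if x \<le> m then n+1-x else if x = m+1 then m+1
     else if x \<le> n-2*m then n+2-x else if x < n-m then n+1-x else if x = n-m then m
     else if x < n then n-x else 2*m+1)"

lemma position_cases: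
  assumes "x \<in> {1..n}"
  obtains (first) "x = 1" "1 \<le> n"
  | (low) "2 \<le> x" "x \<le> m"
  | (fixed_point) "2 \<le> x" "x = m+1"
  | (mid_low) "m+2 \<le> x" "x \<le> n-2*m"
  | (mid_high) "n-2*m < x" "x < n-m"
  | (n_minus_m) "m+2 \<le> x" "x = n-m"
  | (high) "n-m < x" "x < n"
  | (last) "2 \<le> x" "x = n"
proof -
  have "x = 1 \<or> (2 \<le> x \<and> x \<le> m) \<or> (2 \<le> x \<and> x = m+1) \<or> (m+2 \<le> x \<and> x \<le> n-2*m)
    \<or> (n-2*m < x \<and> x < n-m) \<or> (m+2 \<le> x \<and> x = n-m) \<or> (n-m < x \<and> x < n) \<or> (2 \<le> x \<and> x = n)"
    using assms n_cases by auto
  then show thesis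
    using that assms by auto
qed

lemma \<sigma>_first: "x = 1 \<Longrightarrow> \<sigma> x = n"
  by (simp add: \<sigma>_def)

lemma \<sigma>_low: "2 \<le> x \<Longrightarrow> x \<le> m \<Longrightarrow> \<sigma> x = n+1-x"
  by (simp add: \<sigma>_def)

lemma \<sigma>_fixed_point: "2 \<le> x \<Longrightarrow> x = m+1 \<Longrightarrow> \<sigma> x = x"
  by (simp add: \<sigma>_def)

lemma \<sigma>_mid_low: "m+2 \<le> x \<Longrightarrow> x \<le> n-2*m \<Longrightarrow> \<sigma> x = n+2-x"
  by (simp add: \<sigma>_def)

lemma \<sigma>_mid_high: "n-2*m < x \<Longrightarrow> x < n-m \<Longrightarrow> \<sigma> x = n+1-x"
  using n_cases by (auto simp add: \<sigma>_def)

lemma \<sigma>_n_minus_m: "m+2 \<le> x \<Longrightarrow> x = n-m \<Longrightarrow> \<sigma> x = m"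
  using n_cases by (auto simp add: \<sigma>_def)

lemma \<sigma>_high: "n-m < x \<Longrightarrow> x < n \<Longrightarrow> \<sigma> x = n-x"
  using n_cases by (auto simp add: \<sigma>_def)

lemma \<sigma>_last: "2 \<le> x \<Longrightarrow> x = n \<Longrightarrow> \<sigma> x = 2*m+1"
  using n_cases by (auto simp add: \<sigma>_def)

lemmas \<sigma>_values = \<sigma>_first \<sigma>_low \<sigma>_fixed_point \<sigma>_mid_low \<sigma>_mid_high \<sigma>_n_minus_m \<sigma>_high \<sigma>_last

lemma \<sigma>_maps_to:
  assumes "x \<in> {1..n}"
  shows "\<sigma> x \<in> {1..n}"
  by (rule position_cases[OF assms]; insert assms n_cases; simp add: \<sigma>_values; arith)

lemma \<sigma>_inj_on: "inj_on \<sigma> {1..n}"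
proof (rule inj_onI)
  fix x y assume x: "x \<in> {1..n}" and y: "y \<in> {1..n}" and eq: "\<sigma> x = \<sigma> y"
  show "x = y"
    by (rule position_cases[OF x]; rule position_cases[OF y];
        insert x y eq n_cases; simp add: \<sigma>_values; arith)
qed

lemma displacement_first: "x = 1 \<Longrightarrow> 1 \<le> n \<Longrightarrow> T n x (\<sigma> x) = int n - 1"
  by (simp add: \<sigma>_first T_def)

lemma displacement_low: "2 \<le> x \<Longrightarrow> x \<le> m \<Longrightarrow> T n x (\<sigma> x) = int n + 1 - 2 * int x"
  using n_cases by (simp add: \<sigma>_low T_def) arith

lemma displacement_fixed_point: "2 \<le> x \<Longrightarrow> x = m+1 \<Longrightarrow> T n x (\<sigma> x) = 0"
  by (simp add: \<sigma>_fixed_point T_def)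

lemma displacement_mid_low:
  "m+2 \<le> x \<Longrightarrow> x \<le> n-2*m \<Longrightarrow> T n x (\<sigma> x) = int n + 2 - 2 * int x"
  using n_cases by (simp add: \<sigma>_mid_low T_def) arith

lemma displacement_mid_high:
  "n-2*m < x \<Longrightarrow> x < n-m \<Longrightarrow> T n x (\<sigma> x) = 2 * int x - int n - 1"
  using n_cases by (simp add: \<sigma>_mid_high T_def) arith

lemma displacement_n_minus_m: "m+2 \<le> x \<Longrightarrow> x = n-m \<Longrightarrow> T n x (\<sigma> x) = int n - 2 * int m"
  using n_cases by (simp add: \<sigma>_n_minus_m T_def)

lemma displacement_high: "n-m < x \<Longrightarrow> x < n \<Longrightarrow> T n x (\<sigma> x) = 2 * int x - int n"
  using n_cases by (simp add: \<sigma>_high T_def) arith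

lemma displacement_last: "2 \<le> x \<Longrightarrow> x = n \<Longrightarrow> T n x (\<sigma> x) = int n - 2 * int m - 1"
  using n_cases by (simp add: \<sigma>_last T_def) arith

lemmas displacement_values = displacement_first displacement_low displacement_fixed_point
  displacement_mid_low displacement_mid_high displacement_n_minus_m displacement_high
  displacement_last

lemma displacement_maps_to:
  assumes "x \<in> {1..n}"
  shows "T n x (\<sigma> x) \<in> int ` {0..<n}"
  unfolding image_int_atLeastLessThan
  by (rule position_cases[OF assms]; insert assms n_cases; simp add: displacement_values; arith)

lemma displacement_inj_on: "inj_on (\<lambda>x. T n x (\<sigma> x)) {1..n}"
proof (rule inj_onI)
  fix x y
  assume x: "x \<in> {1..n}" and y: "y \<in> {1..n}" and eq: "T n x (\<sigma> x) = T n y (\<sigma> y)"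
  show "x = y"
    by (rule position_cases[OF x]; rule position_cases[OF y];
        insert x y eq n_cases; simp only: displacement_values; elim disjE; simp; presburger)
qed

lemma solvable_T: "solvable n (T n)"
  unfolding solvable_def
proof (intro exI conjI)
  show "bij_betw \<sigma> {1..n} {1..n}"
    using \<sigma>_inj_on \<sigma>_maps_to by (intro inj_on_card_eq_imp_bij_betw) auto
  show "bij_betw (\<lambda>i. T n i (\<sigma> i)) {1..n} (int ` {0..<n})"
    using displacement_inj_on displacement_maps_to
    by (intro inj_on_card_eq_imp_bij_betw) (auto simp: card_image)
qed

end

theorem theorem1:
  fixes n :: nat
  assumes "n \<ge> 1"
  shows "solvable n (T n) \<longleftrightarrow> (n mod 4 = 0 \<or> n mod 4 = 1)"
proof
  show "n mod 4 = 0 \<or> n mod 4 = 1" if "solvable n (T n)"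
    using that by (rule solvable_T_imp_mod_4)
next
  assume "n mod 4 = 0 \<or> n mod 4 = 1"
  then interpret residue_0_or_1_mod_4 n "n div 4"
    by unfold_locales presburger
  show "solvable n (T n)"
    by (rule solvable_T)
qed

end
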